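(* If $\alpha\in\mathrm{Aut}^0A_\Gamma$, then for any $a,b\in X$, $\langle\alpha_*b,a\rangle\ne0$ implies $a=b$ or $a\ge b$.
   Context: $\Gamma$ is a finite simplicial graph with vertex set $X$, $A_\Gamma$ its right-angled Artin group, $H_\Gamma$ its abelianization with basis the images of $X$, and $\langle-,-\rangle$ the inner product on $H_\Gamma$ making this basis orthonormal; $\alpha_*$ is the induced automorphism of $H_\Gamma$ and $b$ also denotes the image of $b$. $\mathrm{lk}(v)$ = neighbours, $\mathrm{st}(v)=\mathrm{lk}(v)\cup\{v\}$; $v\ge w$ iff $\mathrm{lk}(w)\subset\mathrm{st}(v)$ (extended to letters of $X\cup X^{-1}$ via their vertices). $\mathrm{Aut}^0A_\Gamma$ is the subgroup of $\mathrm{Aut}\,A_\Gamma$ generated by: transvections $\tau_{u,v}$ ($u,v\in X^{\pm1}$, $u\ge v$, distinct vertices; $v\mapsto vu$, other generators fixed), partial conjugations $c_{u,Y}$ ($u\in X^{\pm1}$, $Y$ a union of connected components of $\Gamma$ minus $\mathrm{st}$ of the vertex of $u$; $y\mapsto u^{-1}yu$ for $y\in Y$, others fixed), and inversions ($x\mapsto x^{-1}$ for one $x\in X$). *)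

theory Defs
  imports Main
begin

text \<open>Letters of X \<union> X^-1 are pairs (x, s) with
s = True for x and s = False for x^-1.  Elements of A_Gamma are words modulo
the RAAG relations.\<close>

type_synonym 'v letter = "'v \<times> bool"
type_synonym 'v word = "'v letter list"

definition simple_graph :: "'v set \<Rightarrow> ('v \<Rightarrow> 'v \<Rightarrow> bool) \<Rightarrow> bool" where
  "simple_graph V E \<longleftrightarrow> finite V \<and> (\<forall>x y. E x y \<longrightarrow> E y x) \<and> (\<forall>x. \<not> E x x)
     \<and> (\<forall>x y. E x y \<longrightarrow> x \<in> V \<and> y \<in> V)"

definition inv_letter :: "'v letter \<Rightarrow> 'v letter" where
  "inv_letter l = (fst l, \<not> snd l)"

definition inv_word :: "'v word \<Rightarrow> 'v word" where
  "inv_word w = rev (map inv_letter w)"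

inductive raag_step :: "('v \<Rightarrow> 'v \<Rightarrow> bool) \<Rightarrow> 'v word \<Rightarrow> 'v word \<Rightarrow> bool" for E where
  cancel: "raag_step E (xs @ [l, inv_letter l] @ ys) (xs @ ys)"
| commute: "E a b \<Longrightarrow> raag_step E (xs @ [(a, s), (b, t)] @ ys) (xs @ [(b, t), (a, s)] @ ys)"

definition raag_eq :: "('v \<Rightarrow> 'v \<Rightarrow> bool) \<Rightarrow> 'v word \<Rightarrow> 'v word \<Rightarrow> bool" where
  "raag_eq E = equivclp (raag_step E)"

definition lk :: "'v set \<Rightarrow> ('v \<Rightarrow> 'v \<Rightarrow> bool) \<Rightarrow> 'v \<Rightarrow> 'v set" where
  "lk V E v = {w \<in> V. E v w}"

definition st :: "'v set \<Rightarrow> ('v \<Rightarrow> 'v \<Rightarrow> bool) \<Rightarrow> 'v \<Rightarrow> 'v set" where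
  "st V E v = insert v (lk V E v)"

text \<open>v \<ge> w iff lk(w) \<subseteq> st(v).\<close>
definition vdom :: "'v set \<Rightarrow> ('v \<Rightarrow> 'v \<Rightarrow> bool) \<Rightarrow> 'v \<Rightarrow> 'v \<Rightarrow> bool" where
  "vdom V E v w \<longleftrightarrow> lk V E w \<subseteq> st V E v"

text \<open>An endomorphism of A_Gamma is given by the images of the generators x \<in> X
(a map 'v \<Rightarrow> word); it acts on words by substitution.\<close>
definition subst :: "('v \<Rightarrow> 'v word) \<Rightarrow> 'v word \<Rightarrow> 'v word" where
  "subst \<phi> w = concat (map (\<lambda>l. if snd l then \<phi> (fst l) else inv_word (\<phi> (fst l))) w)"

definition id_map :: "'v \<Rightarrow> 'v word" where
  "id_map x = [(x, True)]"

text \<open>Transvection tau_{u,v}: v \<mapsto> v u (u, v letters, distinct vertices, u \<ge> v).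
If v = x^-1 then x^-1 \<mapsto> x^-1 u, i.e. x \<mapsto> u^-1 x.\<close>
definition transvection :: "'v letter \<Rightarrow> 'v letter \<Rightarrow> 'v \<Rightarrow> 'v word" where
  "transvection u v y =
     (if y = fst v then (if snd v then [(y, True), u] else [inv_letter u, (y, True)])
      else [(y, True)])"

definition partial_conj :: "'v letter \<Rightarrow> 'v set \<Rightarrow> 'v \<Rightarrow> 'v word" where
  "partial_conj u Y y = (if y \<in> Y then [inv_letter u, (y, True), u] else [(y, True)])"

definition inversion :: "'v \<Rightarrow> 'v \<Rightarrow> 'v word" where
  "inversion x y = (if y = x then [(y, False)] else [(y, True)])"

definition union_of_components :: "'v set \<Rightarrow> ('v \<Rightarrow> 'v \<Rightarrow> bool) \<Rightarrow> 'v \<Rightarrow> 'v set \<Rightarrow> bool" where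
  "union_of_components V E z Y \<longleftrightarrow> Y \<subseteq> V - st V E z \<and>
     (\<forall>y \<in> Y. \<forall>w \<in> V - st V E z. E y w \<longrightarrow> w \<in> Y)"

inductive aut0_generator :: "'v set \<Rightarrow> ('v \<Rightarrow> 'v \<Rightarrow> bool) \<Rightarrow> ('v \<Rightarrow> 'v word) \<Rightarrow> bool"
  for V E where
  transv: "fst u \<in> V \<Longrightarrow> fst v \<in> V \<Longrightarrow> fst u \<noteq> fst v \<Longrightarrow> vdom V E (fst u) (fst v)
            \<Longrightarrow> aut0_generator V E (transvection u v)"
| pconj: "fst u \<in> V \<Longrightarrow> union_of_components V E (fst u) Y
            \<Longrightarrow> aut0_generator V E (partial_conj u Y)"
| inv: "x \<in> V \<Longrightarrow> aut0_generator V E (inversion x)"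

text \<open>Products of generators (composition \<alpha> \<circ> \<beta> is x \<mapsto> subst \<alpha> (\<beta> x)).  The
generating set is closed under inverses, so this is the generated subgroup.\<close>
inductive aut0_prod :: "'v set \<Rightarrow> ('v \<Rightarrow> 'v \<Rightarrow> bool) \<Rightarrow> ('v \<Rightarrow> 'v word) \<Rightarrow> bool"
  for V E where
  ident: "aut0_prod V E id_map"
| step: "aut0_prod V E \<phi> \<Longrightarrow> aut0_generator V E g \<Longrightarrow> aut0_prod V E (\<lambda>x. subst g (\<phi> x))"

definition Aut0 :: "'v set \<Rightarrow> ('v \<Rightarrow> 'v \<Rightarrow> bool) \<Rightarrow> ('v \<Rightarrow> 'v word) set" where
  "Aut0 V E = {\<alpha>. \<exists>\<phi>. aut0_prod V E \<phi> \<and> (\<forall>x \<in> V. raag_eq E (\<alpha> x) (\<phi> x) \<and> set (\<alpha> x) \<subseteq> V \<times> UNIV)}"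

text \<open>Abelianisation H_Gamma = Z^X: image of a word is its exponent-sum vector.
The inner product <h, a> with a basis vector a is the coordinate h a.\<close>
definition abel :: "'v word \<Rightarrow> 'v \<Rightarrow> int" where
  "abel w a = sum_list (map (\<lambda>l. if fst l = a then (if snd l then 1 else -1) else 0) w)"

definition alpha_star :: "('v \<Rightarrow> 'v word) \<Rightarrow> 'v \<Rightarrow> ('v \<Rightarrow> int)" where
  "alpha_star \<alpha> b = abel (\<alpha> b)"

definition inner_H :: "('v \<Rightarrow> int) \<Rightarrow> 'v \<Rightarrow> int" where
  "inner_H h a = h a"

end

theory Submission
  imports Defs
begin

text \<open>Every generator of \<open>Aut\<^sup>0A\<^sub>\<Gamma>\<close> sends a generator \<open>c\<close> to a word whose abelianisation
is supported on vertices \<open>a\<close> with \<open>a \<ge> c\<close>. Since \<open>\<ge>\<close> is reflexive and transitive and the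
abelianisation of a composite is the matrix product, the same holds for every product of
generators, hence for every element of \<open>Aut\<^sup>0A\<^sub>\<Gamma>\<close>.\<close>

lemma abel_Nil [simp]: "abel [] a = 0"
  by (simp add: abel_def)

lemma abel_Cons [simp]:
  "abel (l # w) a = (if fst l = a then (if snd l then 1 else -1) else 0) + abel w a"
  by (simp add: abel_def)

lemma abel_append [simp]: "abel (xs @ ys) a = abel xs a + abel ys a"
  by (simp add: abel_def)

lemma abel_inv_word [simp]: "abel (inv_word w) a = - abel w a"
  by (induct w) (auto simp: inv_word_def inv_letter_def)

lemma abel_raag_step: "raag_step E x y \<Longrightarrow> abel x a = abel y a"
  by (induct rule: raag_step.induct) (auto simp: inv_letter_def)

lemma abel_raag_eq: "raag_eq E x y \<Longrightarrow> abel x a = abel y a"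
  unfolding raag_eq_def
proof (induct rule: equivclp_induct)
  case base
  then show ?case by simp
next
  case (step y z)
  then show ?case by (metis abel_raag_step symclpE)
qed

lemma abel_subst:
  assumes "finite S" and "fst ` set w \<subseteq> S"
  shows "abel (subst g w) a = (\<Sum>c\<in>S. abel w c * abel (g c) a)"
  using assms(2)
proof (induct w)
  case Nil
  then show ?case by (simp add: subst_def)
next
  case (Cons l w)
  let ?sign = "if snd l then 1 else -1 :: int"
  have "(\<Sum>c\<in>S. abel (l # w) c * abel (g c) a)
      = (\<Sum>c\<in>S. if fst l = c then ?sign * abel (g c) a else 0) + (\<Sum>c\<in>S. abel w c * abel (g c) a)"
    unfolding sum.distrib[symmetric] by (intro sum.cong) (auto simp: distrib_right)
  also have "(\<Sum>c\<in>S. if fst l = c then ?sign * abel (g c) a else 0) = ?sign * abel (g (fst l)) a"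
    using assms(1) Cons.prems by (simp add: sum.delta)
  finally show ?case
    using Cons by (auto simp: subst_def)
qed

lemma abel_subst_nonzero:
  assumes "abel (subst g w) a \<noteq> 0"
  obtains c where "abel w c \<noteq> 0" and "abel (g c) a \<noteq> 0"
proof -
  have "abel (subst g w) a = (\<Sum>c\<in>fst ` set w. abel w c * abel (g c) a)"
    by (rule abel_subst) auto
  with assms obtain c where "abel w c * abel (g c) a \<noteq> 0"
    by (metis (no_types, lifting) sum.neutral)
  then show thesis by (intro that) auto
qed

lemma vdom_refl: "vdom V E v v"
  by (auto simp: vdom_def st_def)

lemma vdom_trans:
  assumes graph: "simple_graph V E" and uv: "vdom V E u v" and vw: "vdom V E v w"
  shows "vdom V E u w"
  unfolding vdom_def
proof
  fix x
  assume x: "x \<in> lk V E w"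
  show "x \<in> st V E u"
  proof (cases "x = v")
    case False
    with x vw have "x \<in> lk V E v" by (auto simp: vdom_def st_def)
    with uv show ?thesis by (auto simp: vdom_def)
  next
    case True
    with x graph have "E v w" "v \<in> V" "w \<in> V" by (auto simp: lk_def simple_graph_def)
    with uv have "w \<in> st V E u" by (auto simp: vdom_def lk_def)
    \<comment> \<open>Either \<open>w = u\<close>, or \<open>u\<close> is a neighbour of \<open>w\<close> and \<open>v \<ge> w\<close> makes it a neighbour of \<open>v\<close>.\<close>
    show ?thesis
    proof (cases "w = u")
      case True
      with \<open>x = v\<close> \<open>E v w\<close> \<open>v \<in> V\<close> graph show ?thesis
        by (auto simp: st_def lk_def simple_graph_def)
    next
      case False
      with \<open>w \<in> st V E u\<close> graph have "E w u" "u \<in> V"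
        by (auto simp: st_def lk_def simple_graph_def)
      with vw have "u \<in> st V E v" by (auto simp: vdom_def lk_def)
      with \<open>x = v\<close> \<open>v \<in> V\<close> graph show ?thesis
        by (auto simp: st_def lk_def simple_graph_def)
    qed
  qed
qed

lemma aut0_generator_abel_nonzero_vdom:
  assumes "aut0_generator V E g" and "abel (g c) a \<noteq> 0"
  shows "vdom V E a c"
  using assms
proof (induct rule: aut0_generator.induct)
  case (transv u v)
  then have "a = c \<or> a = fst u \<and> c = fst v"
    by (auto simp: transvection_def inv_letter_def split: if_splits)
  with transv show ?case by (auto simp: vdom_refl)
next
  case (pconj u Y)
  then show ?case
    by (auto simp: partial_conj_def inv_letter_def vdom_refl split: if_splits)
next
  case (inv x)
  then show ?case
    by (auto simp: inversion_def vdom_refl split: if_splits)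
qed

lemma aut0_prod_abel_nonzero_vdom:
  assumes graph: "simple_graph V E" and "aut0_prod V E \<phi>" and "abel (\<phi> b) a \<noteq> 0"
  shows "vdom V E a b"
  using assms(2,3)
proof (induct arbitrary: a rule: aut0_prod.induct)
  case ident
  then show ?case by (auto simp: id_map_def vdom_refl split: if_splits)
next
  case (step \<phi> g)
  obtain c where "abel (\<phi> b) c \<noteq> 0" and "abel (g c) a \<noteq> 0"
    using abel_subst_nonzero[OF step.prems] .
  have "vdom V E a c"
    using aut0_generator_abel_nonzero_vdom[OF step.hyps(3) \<open>abel (g c) a \<noteq> 0\<close>] .
  moreover have "vdom V E c b"
    using step.hyps(2)[OF \<open>abel (\<phi> b) c \<noteq> 0\<close>] .
  ultimately show ?case by (rule vdom_trans[OF graph])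
qed

theorem lemma4p6:
  fixes V :: "'v set" and E :: "'v \<Rightarrow> 'v \<Rightarrow> bool" and \<alpha> :: "'v \<Rightarrow> 'v word"
  assumes "simple_graph V E"
    and "\<alpha> \<in> Aut0 V E"
    and "a \<in> V" and "b \<in> V"
    and "inner_H (alpha_star \<alpha> b) a \<noteq> 0"
  shows "a = b \<or> vdom V E a b"
proof -
  obtain \<phi> where "aut0_prod V E \<phi>" and "raag_eq E (\<alpha> b) (\<phi> b)"
    using assms(2,4) by (auto simp: Aut0_def)
  moreover from this(2) assms(5) have "abel (\<phi> b) a \<noteq> 0"
    by (simp add: inner_H_def alpha_star_def abel_raag_eq[of E "\<alpha> b" "\<phi> b"])
  ultimately show ?thesis
    using aut0_prod_abel_nonzero_vdom[OF assms(1)] by simp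
qed

end
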